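(* Let $N\ge 1$ and, for $j=1,\ldots,n$, let $\mathsf{E}_j:\mathcal B(\mathbb R^{M_j})\to\mathcal L(\mathcal H^{\otimes N})$ be a Gaussian observable. Then the collection $\{\mathsf{E}_1,\ldots,\mathsf{E}_n\}$ is Gaussian compatible if and only if there exists a Gaussian observable $\mathsf{G}:\mathcal B(\mathbb R^M)\to\mathcal L(\mathcal H^{\otimes N})$, where $M=\sum_{j=1}^n M_j$ and $\mathbb R^M=\mathbb R^{M_1}\times\cdots\times\mathbb R^{M_n}$, which has the $\mathsf{E}_j$ as its margins, i.e. $\mathsf{E}_j(X)=\mathsf{G}(\mathbb R^{M_1}\times\cdots\times\mathbb R^{M_{j-1}}\times X\times\mathbb R^{M_{j+1}}\times\cdots\times\mathbb R^{M_n})$ for all $j$ and all Borel $X\subseteq\mathbb R^{M_j}$.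
   Context: $\mathcal H^{\otimes N}=L^2(\mathbb R^N)$ with canonical position and momentum operators $Q_j,P_j$, ${\bf R}=(Q_1,P_1,\ldots,Q_N,P_N)^T$, ${\bf \Omega}=\bigoplus_{j=1}^N\begin{pmatrix}0&1\\-1&0\end{pmatrix}$, and Weyl operators $W({\bf x})=e^{-i{\bf x}^T{\bf \Omega R}}$ for ${\bf x}\in\mathbb R^{2N}$. An observable is a POVM $\mathsf{E}:\mathcal B(\mathbb R^M)\to\mathcal L(\mathcal H^{\otimes N})$ ($\mathcal L$ = bounded operators). It is Gaussian if its Fourier transform is $\int e^{i{\bf p}^T{\bf x}}\,d\mathsf{E}({\bf x})=W({\bf Kp})e^{-\frac14{\bf p}^T{\bf Lp}-i{\bf m}^T{\bf p}}$ for all ${\bf p}\in\mathbb R^M$, where ${\bf K}$ is a real $2N\times M$ matrix, ${\bf L}$ a real $M\times M$ matrix with ${\bf L}-i{\bf K}^T{\bf \Omega K}\ge 0$, and ${\bf m}\in\mathbb R^M$; every such triple $({\bf K},{\bf L},{\bf m})$ determines a unique Gaussian observable. A Markov kernel $f:\mathcal B(\mathbb R^{M'})\times\mathbb R^M\to[0,1]$ is a map with $f(\cdot,{\bf x})$ a probability measure for each ${\bf x}$ and $f(X,\cdot)$ measurable for each $X$. It is a Gaussian postprocessing if there exist a real $M\times M'$ matrix ${\bf A}$, a real positive semidefinite $M'\times M'$ matrix ${\bf B}$ and ${\bf c}\in\mathbb R^{M'}$ such that $\int e^{i{\bf p}^T{\bf y}}f(d{\bf y},{\bf x})=e^{i({\bf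 Ap})^T{\bf x}}e^{-\frac14{\bf p}^T{\bf Bp}-i{\bf c}^T{\bf p}}$ for all ${\bf p}\in\mathbb R^{M'}$, ${\bf x}\in\mathbb R^M$; applying it to a Gaussian observable $\mathsf{G}$ with parameters $({\bf K},{\bf L},{\bf m})$ gives the observable $\mathsf{E}(X)=\int f(X,{\bf x})\,d\mathsf{G}({\bf x})$, which is Gaussian with parameters $({\bf KA},{\bf B}+{\bf A}^T{\bf LA},{\bf c}+{\bf A}^T{\bf m})$. A collection $\mathcal M$ of Gaussian observables (on the same Hilbert space) is Gaussian compatible if there is a Gaussian observable $\mathsf{G}$ such that every $\mathsf{E}\in\mathcal M$ is obtained from $\mathsf{G}$ via some Gaussian postprocessing. *)

theory Defs
  imports Complex_Main "Jordan_Normal_Form.Matrix" "Jordan_Normal_Form.Conjugate"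
begin

text \<open>Symplectic form Omega = direct sum of N copies of [[0,1],[-1,0]] (0-indexed).\<close>
definition Omega :: "nat \<Rightarrow> real mat" where
  "Omega N = mat (2*N) (2*N) (\<lambda>(a,b).
      if even a \<and> b = a + 1 then 1 else if odd a \<and> a = b + 1 then -1 else 0)"

definition cpsd :: "nat \<Rightarrow> complex mat \<Rightarrow> bool" where
  "cpsd n A \<longleftrightarrow> A \<in> carrier_mat n n \<and>
     (\<forall>z \<in> carrier_vec n. Im ((A *\<^sub>v z) \<bullet>c z) = 0 \<and> 0 \<le> Re ((A *\<^sub>v z) \<bullet>c z))"

definition rpsd :: "nat \<Rightarrow> real mat \<Rightarrow> bool" where
  "rpsd n B \<longleftrightarrow> B \<in> carrier_mat n n \<and> transpose_mat B = B \<and>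
     (\<forall>x \<in> carrier_vec n. 0 \<le> x \<bullet> (B *\<^sub>v x))"

text \<open>A Gaussian observable on L^2(R^N) with outcome space R^M is given by its parameter triple
  (K, L, m) subject to  L - i K^T Omega K >= 0.\<close>
definition gaussian_obs :: "nat \<Rightarrow> nat \<Rightarrow> real mat \<times> real mat \<times> real vec \<Rightarrow> bool" where
  "gaussian_obs N M P \<longleftrightarrow> (case P of (K, L, m) \<Rightarrow>
     K \<in> carrier_mat (2*N) M \<and> L \<in> carrier_mat M M \<and> m \<in> carrier_vec M \<and>
     cpsd M (map_mat complex_of_real L
             - \<i> \<cdot>\<^sub>m map_mat complex_of_real (transpose_mat K * Omega N * K)))"

text \<open>Fourier transform of the observable at p, the operator W(Kp) * c being represented
  by the pair (Kp, c) (W is injective and c is never 0).\<close>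
definition fourier :: "real mat \<times> real mat \<times> real vec \<Rightarrow> real vec \<Rightarrow> real vec \<times> complex" where
  "fourier P p = (case P of (K, L, m) \<Rightarrow>
     (K *\<^sub>v p, exp (complex_of_real (- (1/4) * (p \<bullet> (L *\<^sub>v p))) - \<i> * complex_of_real (m \<bullet> p))))"

definition gauss_postproc :: "nat \<Rightarrow> nat \<Rightarrow> real mat \<times> real mat \<times> real vec
      \<Rightarrow> real mat \<times> real mat \<times> real vec \<Rightarrow> bool" where
  "gauss_postproc M M' G E \<longleftrightarrow> (\<exists>A B c. A \<in> carrier_mat M M' \<and> rpsd M' B \<and> c \<in> carrier_vec M' \<and>
     (\<forall>p \<in> carrier_vec M'.
        fourier E p = (fst (fourier G (A *\<^sub>v p)),
           snd (fourier G (A *\<^sub>v p)) *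
             exp (complex_of_real (- (1/4) * (p \<bullet> (B *\<^sub>v p))) - \<i> * complex_of_real (c \<bullet> p)))))"

definition gaussian_compatible ::
  "nat \<Rightarrow> nat \<Rightarrow> (nat \<Rightarrow> nat) \<Rightarrow> (nat \<Rightarrow> real mat \<times> real mat \<times> real vec) \<Rightarrow> bool" where
  "gaussian_compatible N n Ms E \<longleftrightarrow>
     (\<exists>M G. gaussian_obs N M G \<and> (\<forall>j < n. gauss_postproc M (Ms j) G (E j)))"

text \<open>Offset of block j in R^M = R^(Ms 0) x ... x R^(Ms (n-1)), and the embedding
  of R^(Ms j) into R^M as the j-th block (adjoint of the j-th coordinate projection).\<close>
definition block_offset :: "(nat \<Rightarrow> nat) \<Rightarrow> nat \<Rightarrow> nat" where
  "block_offset Ms j = (\<Sum>i<j. Ms i)"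

definition block_embed :: "nat \<Rightarrow> (nat \<Rightarrow> nat) \<Rightarrow> nat \<Rightarrow> real vec \<Rightarrow> real vec" where
  "block_embed M Ms j q = vec M (\<lambda>a.
     if block_offset Ms j \<le> a \<and> a < block_offset Ms j + Ms j then q $ (a - block_offset Ms j) else 0)"

text \<open>E is the j-th margin of G: the margin E_j(X) = G(pi_j^{-1}(X)) has Fourier transform
  q \<mapsto> FT_G(pi_j^T q).\<close>
definition is_margin :: "nat \<Rightarrow> (nat \<Rightarrow> nat) \<Rightarrow> nat \<Rightarrow> real mat \<times> real mat \<times> real vec
      \<Rightarrow> real mat \<times> real mat \<times> real vec \<Rightarrow> bool" where
  "is_margin M Ms j G E \<longleftrightarrow>
     (\<forall>q \<in> carrier_vec (Ms j). fourier E q = fourier G (block_embed M Ms j q))"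

end

theory Submission
  imports Defs
begin

text \<open>A Gaussian postprocessing \<open>(A, B, c)\<close> maps the parameters \<open>(K, L, m)\<close> of a
  Gaussian observable to \<open>(K A, B + A\<^sup>T L A, c + A\<^sup>T m)\<close>, and these are again admissible:
  the new matrix \<open>L' - i K'\<^sup>T \<Omega> K'\<close> equals \<open>B + A\<^sup>T (L - i K\<^sup>T \<Omega> K) A\<close>, a sum of
  positive semidefinite matrices. The \<open>j\<close>-th margin of an observable on \<open>\<real>\<^sup>M\<close> is its
  postprocessing by the inclusion of the \<open>j\<close>-th block (with \<open>B = 0\<close>, \<open>c = 0\<close>), so a joint
  observable witnesses the compatibility of its margins. Conversely, if every \<open>E\<^sub>j\<close> is the
  postprocessing \<open>(A\<^sub>j, B\<^sub>j, c\<^sub>j)\<close> of one \<open>G\<close>, then the single postprocessing of \<open>G\<close>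
  by the block row \<open>[A\<^sub>1 | \<dots> | A\<^sub>n]\<close>, the block diagonal matrix of the \<open>B\<^sub>j\<close> and
  the concatenation of the \<open>c\<^sub>j\<close> is a Gaussian observable on \<open>\<real>\<^sup>M\<close> whose \<open>j\<close>-th
  margin is \<open>E\<^sub>j\<close>.\<close>

section \<open>Matrix identities\<close>

lemma mult_mat_vec_zero [simp]:
  "A \<in> carrier_mat r c \<Longrightarrow> A *\<^sub>v 0\<^sub>v c = (0\<^sub>v r :: 'a::semiring_0 vec)"
  by (rule eq_vecI) (auto simp: scalar_prod_def)

lemma zero_mat_mult_vec [simp]:
  "v \<in> carrier_vec c \<Longrightarrow> 0\<^sub>m r c *\<^sub>v v = (0\<^sub>v r :: 'a::semiring_0 vec)"
  by (rule eq_vecI) (auto simp: scalar_prod_def)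

lemma scalar_prod_congruence:
  fixes A L :: "'a::comm_semiring_0 mat"
  assumes A: "A \<in> carrier_mat m n" and L: "L \<in> carrier_mat m m" and x: "x \<in> carrier_vec n"
  shows "x \<bullet> (transpose_mat A * L * A *\<^sub>v x) = (A *\<^sub>v x) \<bullet> (L *\<^sub>v (A *\<^sub>v x))"
proof -
  have Lx: "L *\<^sub>v (A *\<^sub>v x) \<in> carrier_vec m" using A L x by simp
  have "x \<bullet> (transpose_mat A * L * A *\<^sub>v x) = x \<bullet> (transpose_mat A *\<^sub>v (L *\<^sub>v (A *\<^sub>v x)))"
    by (subst assoc_mult_mat_vec[of "transpose_mat A * L" n m A n x]) (use A L x in simp_all)
  also have "\<dots> = (transpose_mat A *\<^sub>v (L *\<^sub>v (A *\<^sub>v x))) \<bullet> x"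
    by (rule comm_scalar_prod[of _ n]) (use A Lx x in simp_all)
  also have "\<dots> = (L *\<^sub>v (A *\<^sub>v x)) \<bullet> (A *\<^sub>v x)"
    by (rule transpose_vec_mult_scalar[OF A x Lx])
  also have "\<dots> = (A *\<^sub>v x) \<bullet> (L *\<^sub>v (A *\<^sub>v x))"
    by (rule comm_scalar_prod[of _ m]) (use A Lx x in simp_all)
  finally show ?thesis .
qed

lemma transpose_mult_congruence:
  fixes K A W :: "'a::comm_semiring_0 mat"
  assumes K: "K \<in> carrier_mat n m" and A: "A \<in> carrier_mat m k" and W: "W \<in> carrier_mat n n"
  shows "transpose_mat (K * A) * W * (K * A) = transpose_mat A * (transpose_mat K * W * K) * A"
proof -
  have KT: "transpose_mat K \<in> carrier_mat m n" and AT: "transpose_mat A \<in> carrier_mat k m"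
    using K A by simp_all
  have KTW: "transpose_mat K * W \<in> carrier_mat m n" using KT W by simp
  have "transpose_mat (K * A) * W * (K * A) = transpose_mat A * transpose_mat K * W * (K * A)"
    by (simp only: transpose_mult[OF K A])
  also have "\<dots> = transpose_mat A * (transpose_mat K * W) * (K * A)"
    using AT KT W by simp
  also have "\<dots> = transpose_mat A * (transpose_mat K * W) * K * A"
    by (rule assoc_mult_mat[symmetric, OF mult_carrier_mat[OF AT KTW] K A])
  also have "\<dots> = transpose_mat A * (transpose_mat K * W * K) * A"
    by (simp only: assoc_mult_mat[OF AT KTW K])
  finally show ?thesis .
qed

lemma congruence_diff_smult:
  fixes P X Y :: "'a::comm_ring mat"
  assumes P: "P \<in> carrier_mat m n" and X: "X \<in> carrier_mat m m" and Y: "Y \<in> carrier_mat m m"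
  shows "transpose_mat P * (X - a \<cdot>\<^sub>m Y) * P
    = transpose_mat P * X * P - a \<cdot>\<^sub>m (transpose_mat P * Y * P)"
proof -
  have PT: "transpose_mat P \<in> carrier_mat n m" using P by simp
  have "transpose_mat P * (X - a \<cdot>\<^sub>m Y) = transpose_mat P * X - a \<cdot>\<^sub>m (transpose_mat P * Y)"
    using mult_minus_distrib_mat[OF PT X, of "a \<cdot>\<^sub>m Y"] mult_smult_distrib[OF PT Y] Y by simp
  then show ?thesis
    using minus_mult_distrib_mat[of "transpose_mat P * X" n m "a \<cdot>\<^sub>m (transpose_mat P * Y)" P n]
      mult_smult_assoc_mat[of "transpose_mat P * Y" n m P n] PT X Y P
    by simp
qed

lemma of_real_mat_congruence:
  assumes A: "A \<in> carrier_mat m n" and L: "L \<in> carrier_mat m m"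
  shows "map_mat complex_of_real (transpose_mat A * L * A)
    = transpose_mat (map_mat complex_of_real A) * map_mat complex_of_real L
      * map_mat complex_of_real A"
proof -
  have "map_mat complex_of_real (transpose_mat A * L * A)
      = map_mat complex_of_real (transpose_mat A * L) * map_mat complex_of_real A"
    by (rule of_real_hom.mat_hom_mult[of _ n m]) (use A L in auto)
  also have "map_mat complex_of_real (transpose_mat A * L)
      = map_mat complex_of_real (transpose_mat A) * map_mat complex_of_real L"
    by (rule of_real_hom.mat_hom_mult[of _ n m]) (use A L in auto)
  finally show ?thesis by (simp add: map_mat_transpose)
qed

section \<open>Positive semidefinite matrices\<close>

lemma rpsd_zero: "rpsd n (0\<^sub>m n n)"
  by (simp add: rpsd_def)

lemma rpsd_add:
  assumes "rpsd n A" and "rpsd n B"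
  shows "rpsd n (A + B)"
proof -
  have A: "A \<in> carrier_mat n n" and B: "B \<in> carrier_mat n n"
    using assms by (auto simp: rpsd_def)
  have "x \<bullet> ((A + B) *\<^sub>v x) = x \<bullet> (A *\<^sub>v x) + x \<bullet> (B *\<^sub>v x)" if "x \<in> carrier_vec n" for x
    using A B that by (simp add: add_mult_distrib_mat_vec scalar_prod_add_distrib[of _ n])
  then show ?thesis
    using assms A B by (auto simp: rpsd_def transpose_add add_nonneg_nonneg)
qed

lemma rpsd_congruence:
  assumes B: "rpsd n B" and P: "P \<in> carrier_mat m n"
  shows "rpsd m (P * B * transpose_mat P)"
proof -
  have Bc: "B \<in> carrier_mat n n" and Bs: "transpose_mat B = B"
    and Bx: "\<And>y. y \<in> carrier_vec n \<Longrightarrow> 0 \<le> y \<bullet> (B *\<^sub>v y)"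
    using B by (auto simp: rpsd_def)
  have PB: "P * B \<in> carrier_mat m n" using P Bc by simp
  have "transpose_mat (P * B * transpose_mat P) = P * transpose_mat (P * B)"
    by (subst transpose_mult[OF PB]) (use P in simp_all)
  also have "\<dots> = P * B * transpose_mat P"
    using P Bc by (simp add: transpose_mult[OF P Bc] Bs)
  moreover have "x \<bullet> (P * B * transpose_mat P *\<^sub>v x)
      = (transpose_mat P *\<^sub>v x) \<bullet> (B *\<^sub>v (transpose_mat P *\<^sub>v x))"
    if "x \<in> carrier_vec m" for x
    using scalar_prod_congruence[of "transpose_mat P" n m B x] P Bc that by simp
  ultimately show ?thesis
    using P PB Bs Bx by (auto simp: rpsd_def)
qed

lemma cpsd_add:
  assumes "cpsd n C\<^sub>1" and "cpsd n C\<^sub>2"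
  shows "cpsd n (C\<^sub>1 + C\<^sub>2)"
proof -
  have C: "C\<^sub>1 \<in> carrier_mat n n" "C\<^sub>2 \<in> carrier_mat n n" using assms by (auto simp: cpsd_def)
  have "((C\<^sub>1 + C\<^sub>2) *\<^sub>v z) \<bullet>c z = (C\<^sub>1 *\<^sub>v z) \<bullet>c z + (C\<^sub>2 *\<^sub>v z) \<bullet>c z" if "z \<in> carrier_vec n" for z
    using C that by (simp add: add_mult_distrib_mat_vec[OF C] add_scalar_prod_distrib[of _ n])
  then show ?thesis
    using assms by (auto simp: cpsd_def)
qed

lemma cpsd_congruence:
  assumes P: "P \<in> carrier_mat m n" and C: "cpsd m C"
  shows "cpsd n (transpose_mat (map_mat complex_of_real P) * C * map_mat complex_of_real P)"
proof -
  let ?P = "map_mat complex_of_real P"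
  have Pc: "?P \<in> carrier_mat m n" and Cc: "C \<in> carrier_mat m m"
    using P C by (auto simp: cpsd_def)
  have "(transpose_mat ?P * C * ?P *\<^sub>v z) \<bullet>c z = (C *\<^sub>v (?P *\<^sub>v z)) \<bullet>c (?P *\<^sub>v z)"
    if z: "z \<in> carrier_vec n" for z
  proof -
    have "conjugate (?P *\<^sub>v z) = ?P *\<^sub>v conjugate z"
      by (rule eq_vecI) (use P z in \<open>auto simp: scalar_prod_def\<close>)
    moreover have "(transpose_mat ?P * C * ?P *\<^sub>v z) \<bullet>c z
        = (C *\<^sub>v (?P *\<^sub>v z)) \<bullet> (?P *\<^sub>v conjugate z)"
      using Pc Cc z by (simp add: transpose_vec_mult_scalar[OF Pc] assoc_mult_mat_vec[of _ n m _ n])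
    ultimately show ?thesis by simp
  qed
  then show ?thesis
    using C Pc Cc by (auto simp: cpsd_def)
qed

lemma of_real_mat_cscalar_prod:
  fixes B :: "real mat"
  assumes B: "B \<in> carrier_mat n n" and z: "z \<in> carrier_vec n"
  defines "x \<equiv> map_vec Re z" and "y \<equiv> map_vec Im z"
  shows "Re ((map_mat complex_of_real B *\<^sub>v z) \<bullet>c z) = x \<bullet> (B *\<^sub>v x) + y \<bullet> (B *\<^sub>v y)"
    and "Im ((map_mat complex_of_real B *\<^sub>v z) \<bullet>c z) = x \<bullet> (B *\<^sub>v y) - y \<bullet> (B *\<^sub>v x)"
proof -
  have x: "x \<in> carrier_vec n" and y: "y \<in> carrier_vec n" using z by (auto simp: x_def y_def)
  have e: "(map_mat complex_of_real B *\<^sub>v z) \<bullet>c z =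
     (\<Sum>a\<in>{0..<n}. (\<Sum>b\<in>{0..<n}. complex_of_real (B $$ (a,b)) * z $ b) * cnj (z $ a))"
    using B z by (simp add: scalar_prod_def)
  have qf: "u \<bullet> (B *\<^sub>v v) = (\<Sum>a\<in>{0..<n}. \<Sum>b\<in>{0..<n}. B $$ (a,b) * v $ b * u $ a)"
    if "u \<in> carrier_vec n" "v \<in> carrier_vec n" for u v
    using that B by (simp add: scalar_prod_def sum_distrib_left sum_distrib_right ac_simps)
  have "Re ((map_mat complex_of_real B *\<^sub>v z) \<bullet>c z) =
     (\<Sum>a\<in>{0..<n}. \<Sum>b\<in>{0..<n}. B $$ (a,b) * (Re (z $ b) * Re (z $ a) + Im (z $ b) * Im (z $ a)))"
    unfolding e Re_sum
    by (intro sum.cong refl) (simp add: sum_distrib_right sum_distrib_left Re_sum algebra_simps)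
  also have "\<dots> = x \<bullet> (B *\<^sub>v x) + y \<bullet> (B *\<^sub>v y)"
    unfolding qf[OF x x] qf[OF y y] using z
    by (simp add: x_def y_def sum.distrib[symmetric] algebra_simps)
  finally show "Re ((map_mat complex_of_real B *\<^sub>v z) \<bullet>c z) = x \<bullet> (B *\<^sub>v x) + y \<bullet> (B *\<^sub>v y)" .
  have "Im ((map_mat complex_of_real B *\<^sub>v z) \<bullet>c z) =
     (\<Sum>a\<in>{0..<n}. \<Sum>b\<in>{0..<n}. B $$ (a,b) * (Im (z $ b) * Re (z $ a) - Re (z $ b) * Im (z $ a)))"
    unfolding e Im_sum
    by (intro sum.cong refl) (simp add: sum_distrib_right sum_distrib_left Im_sum algebra_simps)
  also have "\<dots> = x \<bullet> (B *\<^sub>v y) - y \<bullet> (B *\<^sub>v x)"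
    unfolding qf[OF x y] qf[OF y x] using z
    by (simp add: x_def y_def sum_subtractf[symmetric] algebra_simps)
  finally show "Im ((map_mat complex_of_real B *\<^sub>v z) \<bullet>c z) = x \<bullet> (B *\<^sub>v y) - y \<bullet> (B *\<^sub>v x)" .
qed

lemma rpsd_imp_cpsd:
  assumes B: "rpsd n B"
  shows "cpsd n (map_mat complex_of_real B)"
proof -
  have Bc: "B \<in> carrier_mat n n" and Bs: "transpose_mat B = B"
    using B by (auto simp: rpsd_def)
  have sym: "v \<bullet> (B *\<^sub>v u) = u \<bullet> (B *\<^sub>v v)" if "u \<in> carrier_vec n" "v \<in> carrier_vec n" for u v
    using transpose_vec_mult_scalar[OF Bc that] that Bc Bs
    by (simp add: comm_scalar_prod[of _ n])
  show ?thesis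
    unfolding cpsd_def
    using B Bc
    by (auto simp: rpsd_def of_real_mat_cscalar_prod sym[of "map_vec Re _" "map_vec Im _"])
qed

section \<open>Block matrices\<close>

text \<open>Matrices of all dimensions share one type, so \<open>'a mat\<close> is no \<open>comm_monoid_add\<close> and
  the library's \<open>sum\<close> does not apply; this sum starts from a zero of explicit dimension.\<close>
fun sum_upto :: "'a::plus \<Rightarrow> (nat \<Rightarrow> 'a) \<Rightarrow> nat \<Rightarrow> 'a" where
  "sum_upto z f 0 = z"
| "sum_upto z f (Suc k) = sum_upto z f k + f k"

lemma sum_upto_closed:
  assumes "P z" and "\<And>i. i < k \<Longrightarrow> P (f i)" and "\<And>x y. P x \<Longrightarrow> P y \<Longrightarrow> P (x + y)"
  shows "P (sum_upto z f k)"
  using assms(2) by (induction k) (auto intro: assms(1,3))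

lemma sum_upto_carrier_mat:
  "(\<And>i. i < k \<Longrightarrow> f i \<in> carrier_mat r c) \<Longrightarrow> sum_upto (0\<^sub>m r c) f k \<in> carrier_mat r c"
  by (induction k) auto

lemma block_offset_add_le_offset:
  assumes "i < j" shows "block_offset Ms i + Ms i \<le> block_offset Ms j"
proof -
  have "block_offset Ms i + Ms i = (\<Sum>k<Suc i. Ms k)" by (simp add: block_offset_def)
  also have "\<dots> \<le> (\<Sum>k<j. Ms k)" by (rule sum_mono2) (use assms in auto)
  finally show ?thesis by (simp add: block_offset_def)
qed

lemma block_offset_add_le_sum:
  assumes "i < n" shows "block_offset Ms i + Ms i \<le> (\<Sum>k<n. Ms k)"
  using block_offset_add_le_offset[OF assms, of Ms] by (simp add: block_offset_def)

definition block_embed_mat :: "nat \<Rightarrow> (nat \<Rightarrow> nat) \<Rightarrow> nat \<Rightarrow> real mat" where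
  "block_embed_mat M Ms j = mat M (Ms j) (\<lambda>(a, b). if a = block_offset Ms j + b then 1 else 0)"

lemma block_embed_mat_carrier [simp]: "block_embed_mat M Ms j \<in> carrier_mat M (Ms j)"
  by (simp add: block_embed_mat_def)

lemma dim_block_embed [simp]: "dim_vec (block_embed M Ms j q) = M"
  by (simp add: block_embed_def)

lemma block_embed_carrier [simp]: "block_embed M Ms j q \<in> carrier_vec M"
  by (simp add: carrier_vecI)

lemma block_embed_mat_mult_vec:
  assumes q: "q \<in> carrier_vec (Ms j)"
  shows "block_embed_mat M Ms j *\<^sub>v q = block_embed M Ms j q"
proof (rule eq_vecI)
  fix a assume "a < dim_vec (block_embed M Ms j q)"
  hence a: "a < M" by (simp add: block_embed_def)
  let ?o = "block_offset Ms j"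
  have "(block_embed_mat M Ms j *\<^sub>v q) $ a = (\<Sum>b<Ms j. if b = a - ?o \<and> ?o \<le> a then q $ b else 0)"
    using a q by (auto simp: block_embed_mat_def scalar_prod_def atLeast0LessThan intro: sum.cong)
  also have "\<dots> = block_embed M Ms j q $ a"
    using a by (auto simp: block_embed_def)
  finally show "(block_embed_mat M Ms j *\<^sub>v q) $ a = block_embed M Ms j q $ a" .
qed (simp add: block_embed_mat_def block_embed_def)

lemma transpose_block_embed_mat_mult_block_embed:
  assumes fits: "block_offset Ms i + Ms i \<le> M" and q: "q \<in> carrier_vec (Ms j)"
  shows "transpose_mat (block_embed_mat M Ms i) *\<^sub>v block_embed M Ms j q
    = (if i = j then q else 0\<^sub>v (Ms i))"
proof (rule eq_vecI)
  fix b assume "b < dim_vec (if i = j then q else 0\<^sub>v (Ms i))"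
  hence b: "b < Ms i" using q by (auto split: if_splits)
  let ?o = "block_offset Ms i" and ?v = "block_embed M Ms j q"
  have "(transpose_mat (block_embed_mat M Ms i) *\<^sub>v ?v) $ b
      = (\<Sum>a<M. (if a = ?o + b then 1 else 0) * ?v $ a)"
    using b by (simp add: block_embed_mat_def scalar_prod_def atLeast0LessThan)
  also have "\<dots> = ?v $ (?o + b)" using fits b by (simp add: if_distrib[of "\<lambda>x. x * _"] cong: if_cong)
  also have "\<dots> = (if i = j then q else 0\<^sub>v (Ms i)) $ b"
    using fits b block_offset_add_le_offset[of i j Ms] block_offset_add_le_offset[of j i Ms]
    by (cases i j rule: linorder_cases) (auto simp: block_embed_def)
  finally show "(transpose_mat (block_embed_mat M Ms i) *\<^sub>v ?v) $ b
      = (if i = j then q else 0\<^sub>v (Ms i)) $ b" .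
qed (use q in \<open>simp add: block_embed_mat_def\<close>)

definition block_row_mat :: "nat \<Rightarrow> (nat \<Rightarrow> nat) \<Rightarrow> (nat \<Rightarrow> real mat) \<Rightarrow> nat \<Rightarrow> real mat" where
  "block_row_mat r Ms X n = sum_upto (0\<^sub>m r (\<Sum>i<n. Ms i))
     (\<lambda>i. X i * transpose_mat (block_embed_mat (\<Sum>i<n. Ms i) Ms i)) n"

lemma block_row_mat_carrier:
  assumes "\<forall>i<n. X i \<in> carrier_mat r (Ms i)"
  shows "block_row_mat r Ms X n \<in> carrier_mat r (\<Sum>i<n. Ms i)"
  unfolding block_row_mat_def by (rule sum_upto_carrier_mat) (use assms in auto)

lemma block_row_mat_mult_block_embed:
  assumes X: "\<forall>i<n. X i \<in> carrier_mat r (Ms i)" and j: "j < n" and q: "q \<in> carrier_vec (Ms j)"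
  shows "block_row_mat r Ms X n *\<^sub>v block_embed (\<Sum>i<n. Ms i) Ms j q = X j *\<^sub>v q"
proof -
  let ?M = "\<Sum>i<n. Ms i"
  let ?S = "sum_upto (0\<^sub>m r ?M) (\<lambda>i. X i * transpose_mat (block_embed_mat ?M Ms i))"
  let ?w = "block_embed ?M Ms j q"
  have w: "?w \<in> carrier_vec ?M" by simp
  have "?S k *\<^sub>v ?w = (if j < k then X j *\<^sub>v q else 0\<^sub>v r)" if "k \<le> n" for k
    using that
  proof (induction k)
    case 0
    show ?case using w by simp
  next
    case (Suc k)
    have Xi: "X i \<in> carrier_mat r (Ms i)" if "i \<le> k" for i using X Suc.prems that by auto
    have Sk: "?S k \<in> carrier_mat r ?M"
      by (rule sum_upto_carrier_mat) (auto intro: mult_carrier_mat[OF Xi])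
    have "?S (Suc k) *\<^sub>v ?w = ?S k *\<^sub>v ?w + (X k * transpose_mat (block_embed_mat ?M Ms k)) *\<^sub>v ?w"
      unfolding sum_upto.simps
      by (rule add_mult_distrib_mat_vec[OF Sk _ w]) (auto intro: mult_carrier_mat[OF Xi])
    also have "\<dots> = ?S k *\<^sub>v ?w + X k *\<^sub>v (transpose_mat (block_embed_mat ?M Ms k) *\<^sub>v ?w)"
      by (subst assoc_mult_mat_vec[OF Xi[of k] _ w]) simp_all
    also have "transpose_mat (block_embed_mat ?M Ms k) *\<^sub>v ?w = (if k = j then q else 0\<^sub>v (Ms k))"
      using Suc.prems
      by (intro transpose_block_embed_mat_mult_block_embed block_offset_add_le_sum q) simp
    finally have "?S (Suc k) *\<^sub>v ?w
        = (if j < k then X j *\<^sub>v q else 0\<^sub>v r) + X k *\<^sub>v (if k = j then q else 0\<^sub>v (Ms k))"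
      using Suc by simp
    moreover have "X j *\<^sub>v q \<in> carrier_vec r"
      by (rule mult_mat_vec_carrier[OF _ q]) (use X j in auto)
    ultimately show ?case using Xi[of k] by (cases j k rule: linorder_cases) auto
  qed
  from this[of n] show ?thesis using j by (simp add: block_row_mat_def)
qed

definition block_diag_mat :: "(nat \<Rightarrow> nat) \<Rightarrow> (nat \<Rightarrow> real mat) \<Rightarrow> nat \<Rightarrow> real mat" where
  "block_diag_mat Ms B n =
     block_row_mat (\<Sum>i<n. Ms i) Ms (\<lambda>i. block_embed_mat (\<Sum>i<n. Ms i) Ms i * B i) n"

lemma block_diag_mat_carrier:
  assumes "\<forall>i<n. B i \<in> carrier_mat (Ms i) (Ms i)"
  shows "block_diag_mat Ms B n \<in> carrier_mat (\<Sum>i<n. Ms i) (\<Sum>i<n. Ms i)"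
  unfolding block_diag_mat_def
  by (rule block_row_mat_carrier)
    (use assms in \<open>auto intro: mult_carrier_mat[OF block_embed_mat_carrier]\<close>)

lemma rpsd_block_diag_mat:
  assumes "\<forall>i<n. rpsd (Ms i) (B i)"
  shows "rpsd (\<Sum>i<n. Ms i) (block_diag_mat Ms B n)"
  unfolding block_diag_mat_def block_row_mat_def
  by (rule sum_upto_closed[where P = "rpsd (\<Sum>i<n. Ms i)"])
    (use assms in \<open>auto intro: rpsd_zero rpsd_add rpsd_congruence\<close>)

lemma block_diag_mat_quadratic_form:
  assumes B: "\<forall>i<n. B i \<in> carrier_mat (Ms i) (Ms i)" and j: "j < n" and q: "q \<in> carrier_vec (Ms j)"
  shows "block_embed (\<Sum>i<n. Ms i) Ms j q
      \<bullet> (block_diag_mat Ms B n *\<^sub>v block_embed (\<Sum>i<n. Ms i) Ms j q)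
    = q \<bullet> (B j *\<^sub>v q)"
proof -
  let ?M = "\<Sum>i<n. Ms i"
  let ?P = "block_embed_mat ?M Ms j"
  have Bj: "B j \<in> carrier_mat (Ms j) (Ms j)" using B j by simp
  have "block_diag_mat Ms B n *\<^sub>v block_embed ?M Ms j q = (?P * B j) *\<^sub>v q"
    unfolding block_diag_mat_def
    by (rule block_row_mat_mult_block_embed)
      (use B j q in \<open>auto intro: mult_carrier_mat[OF block_embed_mat_carrier]\<close>)
  also have "\<dots> = ?P *\<^sub>v (B j *\<^sub>v q)"
    by (rule assoc_mult_mat_vec[OF block_embed_mat_carrier[of ?M Ms j] Bj q])
  finally have "block_embed ?M Ms j q \<bullet> (block_diag_mat Ms B n *\<^sub>v block_embed ?M Ms j q)
      = (transpose_mat ?P *\<^sub>v block_embed ?M Ms j q) \<bullet> (B j *\<^sub>v q)"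
    using Bj q by (simp add: transpose_vec_mult_scalar[of ?P ?M "Ms j", symmetric])
  also have "transpose_mat ?P *\<^sub>v block_embed ?M Ms j q = q"
    using transpose_block_embed_mat_mult_block_embed[OF block_offset_add_le_sum[OF j, of Ms] q]
    by simp
  finally show ?thesis .
qed

text \<open>The concatenation of the vectors \<open>c 0, \<dots>, c (n - 1)\<close>, as the single row of the block
  matrix of their transposes.\<close>
definition stack_vec :: "(nat \<Rightarrow> nat) \<Rightarrow> (nat \<Rightarrow> real vec) \<Rightarrow> nat \<Rightarrow> real vec" where
  "stack_vec Ms c n = row (block_row_mat 1 Ms (\<lambda>i. mat_of_row (c i)) n) 0"

lemma stack_vec_carrier:
  assumes "\<forall>i<n. c i \<in> carrier_vec (Ms i)"
  shows "stack_vec Ms c n \<in> carrier_vec (\<Sum>i<n. Ms i)"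
  unfolding stack_vec_def
  by (rule carrier_vecI)
    (use block_row_mat_carrier[of n "\<lambda>i. mat_of_row (c i)" 1 Ms] assms in auto)

lemma stack_vec_scalar_prod_block_embed:
  assumes c: "\<forall>i<n. c i \<in> carrier_vec (Ms i)" and j: "j < n" and q: "q \<in> carrier_vec (Ms j)"
  shows "stack_vec Ms c n \<bullet> block_embed (\<Sum>i<n. Ms i) Ms j q = c j \<bullet> q"
proof -
  let ?R = "block_row_mat 1 Ms (\<lambda>i. mat_of_row (c i)) n"
  have "?R \<in> carrier_mat 1 (\<Sum>i<n. Ms i)"
    using block_row_mat_carrier[of n "\<lambda>i. mat_of_row (c i)" 1 Ms] c by auto
  then have "stack_vec Ms c n \<bullet> block_embed (\<Sum>i<n. Ms i) Ms j q
      = (?R *\<^sub>v block_embed (\<Sum>i<n. Ms i) Ms j q) $ 0"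
    by (simp add: stack_vec_def)
  also have "?R *\<^sub>v block_embed (\<Sum>i<n. Ms i) Ms j q = mat_of_row (c j) *\<^sub>v q"
    by (rule block_row_mat_mult_block_embed) (use c j q in auto)
  finally show ?thesis by simp
qed

section \<open>Gaussian postprocessing\<close>

lemma Omega_carrier [simp]: "Omega N \<in> carrier_mat (2*N) (2*N)"
  by (simp add: Omega_def)

definition postprocess :: "real mat \<Rightarrow> real mat \<Rightarrow> real vec
    \<Rightarrow> real mat \<times> real mat \<times> real vec \<Rightarrow> real mat \<times> real mat \<times> real vec" where
  "postprocess A B c G = (case G of (K, L, m) \<Rightarrow>
     (K * A, B + transpose_mat A * L * A, c + transpose_mat A *\<^sub>v m))"

lemma fourier_postprocess:
  assumes G: "gaussian_obs N M G" and A: "A \<in> carrier_mat M M'"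
    and B: "B \<in> carrier_mat M' M'" and c: "c \<in> carrier_vec M'" and p: "p \<in> carrier_vec M'"
  shows "fourier (postprocess A B c G) p = (fst (fourier G (A *\<^sub>v p)),
    snd (fourier G (A *\<^sub>v p)) *
      exp (complex_of_real (- (1/4) * (p \<bullet> (B *\<^sub>v p))) - \<i> * complex_of_real (c \<bullet> p)))"
proof -
  obtain K L m where G_def: "G = (K, L, m)" by (cases G)
  have K: "K \<in> carrier_mat (2*N) M" and L: "L \<in> carrier_mat M M" and m: "m \<in> carrier_vec M"
    using G by (auto simp: G_def gaussian_obs_def)
  have ALA: "transpose_mat A * L * A \<in> carrier_mat M' M'"
    using A L by (intro mult_carrier_mat[of _ M' M]) simp_all
  have "p \<bullet> ((B + transpose_mat A * L * A) *\<^sub>v p)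
      = p \<bullet> (B *\<^sub>v p) + p \<bullet> (transpose_mat A * L * A *\<^sub>v p)"
    using B ALA p
    by (simp add: add_mult_distrib_mat_vec[OF B ALA p] scalar_prod_add_distrib[of _ M'])
  also have "p \<bullet> (transpose_mat A * L * A *\<^sub>v p) = (A *\<^sub>v p) \<bullet> (L *\<^sub>v (A *\<^sub>v p))"
    by (rule scalar_prod_congruence[OF A L p])
  moreover have "(c + transpose_mat A *\<^sub>v m) \<bullet> p = c \<bullet> p + m \<bullet> (A *\<^sub>v p)"
    using A c m p
    by (simp add: add_scalar_prod_distrib[of _ M'] transpose_vec_mult_scalar[OF A p m])
  ultimately show ?thesis
    using K A p
    by (simp add: G_def postprocess_def fourier_def exp_add[symmetric] algebra_simps
        add_divide_distrib)
qed

lemma gaussian_obs_postprocess: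
  assumes G: "gaussian_obs N M G" and A: "A \<in> carrier_mat M M'"
    and B: "rpsd M' B" and c: "c \<in> carrier_vec M'"
  shows "gaussian_obs N M' (postprocess A B c G)"
proof -
  obtain K L m where G_def: "G = (K, L, m)" by (cases G)
  define Y where "Y = transpose_mat K * Omega N * K"
  let ?C = "map_mat complex_of_real L - \<i> \<cdot>\<^sub>m map_mat complex_of_real Y"
  let ?A = "map_mat complex_of_real A"
  have K: "K \<in> carrier_mat (2*N) M" and L: "L \<in> carrier_mat M M" and m: "m \<in> carrier_vec M"
    and C: "cpsd M ?C"
    using G by (auto simp: G_def gaussian_obs_def Y_def)
  have Bc: "B \<in> carrier_mat M' M'" using B by (simp add: rpsd_def)
  have Y: "Y \<in> carrier_mat M M"
    unfolding Y_def using K by (intro mult_carrier_mat[of _ M "2*N"]) simp_all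
  have "transpose_mat (K * A) * Omega N * (K * A) = transpose_mat A * Y * A"
    unfolding Y_def by (rule transpose_mult_congruence[OF K A Omega_carrier])
  then have "map_mat complex_of_real (B + transpose_mat A * L * A)
        - \<i> \<cdot>\<^sub>m map_mat complex_of_real (transpose_mat (K * A) * Omega N * (K * A))
      = map_mat complex_of_real B + (map_mat complex_of_real (transpose_mat A * L * A)
          - \<i> \<cdot>\<^sub>m map_mat complex_of_real (transpose_mat A * Y * A))"
    using mult_carrier_mat[OF mult_carrier_mat[OF transpose_carrier_mat[THEN iffD2, OF A] L] A]
      mult_carrier_mat[OF mult_carrier_mat[OF transpose_carrier_mat[THEN iffD2, OF A] Y] A] Bc
    by (intro eq_matI) (auto simp: algebra_simps)
  also have "\<dots> = map_mat complex_of_real B + transpose_mat ?A * ?C * ?A"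
    by (simp only: of_real_mat_congruence[OF A L] of_real_mat_congruence[OF A Y]
        congruence_diff_smult[of ?A M M'] map_carrier_mat A L Y)
  moreover have "cpsd M' (map_mat complex_of_real B + transpose_mat ?A * ?C * ?A)"
    by (rule cpsd_add[OF rpsd_imp_cpsd[OF B] cpsd_congruence[OF A C]])
  ultimately show ?thesis
    using K A Bc L m c
    by (simp add: G_def postprocess_def gaussian_obs_def)
qed

lemma gauss_postproc_iff_postprocess:
  assumes G: "gaussian_obs N M G"
  shows "gauss_postproc M M' G E \<longleftrightarrow>
    (\<exists>A B c. A \<in> carrier_mat M M' \<and> rpsd M' B \<and> c \<in> carrier_vec M' \<and>
      (\<forall>p \<in> carrier_vec M'. fourier E p = fourier (postprocess A B c G) p))"
proof -
  have "(\<forall>p \<in> carrier_vec M'. fourier E p = (fst (fourier G (A *\<^sub>v p)),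
          snd (fourier G (A *\<^sub>v p)) *
            exp (complex_of_real (- (1/4) * (p \<bullet> (B *\<^sub>v p))) - \<i> * complex_of_real (c \<bullet> p))))
      \<longleftrightarrow> (\<forall>p \<in> carrier_vec M'. fourier E p = fourier (postprocess A B c G) p)"
    if "A \<in> carrier_mat M M'" "rpsd M' B" "c \<in> carrier_vec M'" for A B c
    using that by (simp add: fourier_postprocess[OF G] rpsd_def)
  then show ?thesis
    unfolding gauss_postproc_def by blast
qed

lemma gauss_postproc_margin:
  assumes G: "gaussian_obs N M G" and margin: "is_margin M Ms j G E"
  shows "gauss_postproc M (Ms j) G E"
  unfolding gauss_postproc_iff_postprocess[OF G]
proof (intro exI conjI ballI)
  let ?G\<^sub>j = "postprocess (block_embed_mat M Ms j) (0\<^sub>m (Ms j) (Ms j)) (0\<^sub>v (Ms j)) G"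
  fix q :: "real vec" assume q: "q \<in> carrier_vec (Ms j)"
  have "fourier ?G\<^sub>j q = fourier G (block_embed M Ms j q)"
    using q by (simp add: fourier_postprocess[OF G block_embed_mat_carrier] block_embed_mat_mult_vec)
  then show "fourier E q = fourier ?G\<^sub>j q"
    using margin q by (simp add: is_margin_def)
qed (simp_all add: rpsd_zero)

lemma fourier_block_postprocess_block_embed:
  assumes G: "gaussian_obs N M G" and A: "\<forall>i<n. A i \<in> carrier_mat M (Ms i)"
    and B: "\<forall>i<n. B i \<in> carrier_mat (Ms i) (Ms i)" and c: "\<forall>i<n. c i \<in> carrier_vec (Ms i)"
    and j: "j < n" and q: "q \<in> carrier_vec (Ms j)"
  shows "fourier (postprocess (block_row_mat M Ms A n) (block_diag_mat Ms B n) (stack_vec Ms c n) G)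
      (block_embed (\<Sum>i<n. Ms i) Ms j q)
    = fourier (postprocess (A j) (B j) (c j) G) q"
  using A B c j q
  by (simp add: fourier_postprocess[OF G block_row_mat_carrier]
      fourier_postprocess[OF G, of "A j" "Ms j"] block_diag_mat_carrier stack_vec_carrier block_row_mat_mult_block_embed
      block_diag_mat_quadratic_form stack_vec_scalar_prod_block_embed)

theorem proposition1:
  fixes N n :: nat and Ms :: "nat \<Rightarrow> nat"
    and E :: "nat \<Rightarrow> real mat \<times> real mat \<times> real vec"
  assumes "N \<ge> 1"
    and "\<forall>j < n. gaussian_obs N (Ms j) (E j)"
  shows "gaussian_compatible N n Ms E \<longleftrightarrow>
    (\<exists>G. gaussian_obs N (\<Sum>j<n. Ms j) G \<and>
         (\<forall>j < n. is_margin (\<Sum>j<n. Ms j) Ms j G (E j)))"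
proof
  assume "gaussian_compatible N n Ms E"
  then obtain M G where G: "gaussian_obs N M G" and "\<forall>j<n. gauss_postproc M (Ms j) G (E j)"
    unfolding gaussian_compatible_def by blast
  then obtain A B c where ABc: "\<forall>j<n. A j \<in> carrier_mat M (Ms j) \<and> rpsd (Ms j) (B j) \<and>
      c j \<in> carrier_vec (Ms j) \<and>
      (\<forall>q \<in> carrier_vec (Ms j). fourier (E j) q = fourier (postprocess (A j) (B j) (c j) G) q)"
    unfolding gauss_postproc_iff_postprocess[OF G] by metis
  let ?G = "postprocess (block_row_mat M Ms A n) (block_diag_mat Ms B n) (stack_vec Ms c n) G"
  have "gaussian_obs N (\<Sum>j<n. Ms j) ?G"
    using ABc by (intro gaussian_obs_postprocess[OF G])
      (simp_all add: block_row_mat_carrier rpsd_block_diag_mat stack_vec_carrier)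
  moreover have "is_margin (\<Sum>j<n. Ms j) Ms j ?G (E j)" if "j < n" for j
    using ABc that fourier_block_postprocess_block_embed[OF G, of n A Ms B c j]
    by (simp add: is_margin_def rpsd_def)
  ultimately show "\<exists>G. gaussian_obs N (\<Sum>j<n. Ms j) G \<and>
      (\<forall>j < n. is_margin (\<Sum>j<n. Ms j) Ms j G (E j))"
    by blast
next
  assume "\<exists>G. gaussian_obs N (\<Sum>j<n. Ms j) G \<and>
    (\<forall>j < n. is_margin (\<Sum>j<n. Ms j) Ms j G (E j))"
  then show "gaussian_compatible N n Ms E"
    unfolding gaussian_compatible_def by (blast intro: gauss_postproc_margin)
qed

end
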